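(* Let $T$ be a triangle and $n$ a positive integer. Then there exists $\varepsilon_0>0$ such that for every $0<\varepsilon<\varepsilon_0$ there exists a point set $P\subseteq\mathbb{R}^2$ with $|P|\le 20$ such that $\mathcal{H}(T,P,\varepsilon)$ has complete shadow graph and $$h(n,T)\le n^3\,\lambda(\mathcal{H}(T,P,\varepsilon)).$$
   Context: For a triangle $T$ with side lengths $a,b,c$ and $\varepsilon>0$, with $\varepsilon'=\varepsilon\min\{a,b,c\}$, a triangle $A'B'C'$ is $\varepsilon$-congruent to $T$ if there are $A,B,C\in\mathbb{R}^2$ with $ABC$ congruent to $T$ and $A',B',C'$ within distance $\varepsilon'$ of $A,B,C$ respectively. $h(n,T,\varepsilon)$ is the maximum over $n$-point sets $P\subseteq\mathbb{R}^2$ of the number of 3-subsets of $P$ forming triangles $\varepsilon$-congruent to $T$, and $h(n,T)=\min_{\varepsilon>0}h(n,T,\varepsilon)$. For finite $P$, $\mathcal{H}(T,P,\varepsilon)$ is the 3-uniform hypergraph on $P$ whose edges are the triples forming triangles $\varepsilon$-congruent to $T$. The shadow graph of a 3-graph $H$ is the graph on $V(H)$ whose edges are the pairs contained in some edge of $H$; it is complete if all pairs are edges. For a 3-graph $H$ on vertices $1,\dots,m$, its Lagrangian is $\lambda(H)=\max\{\sum_{ijk\in E(H)}x_ix_jx_k : x\in[0,1]^m,\ x_1+\dots+x_m=1\}$. *)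

theory Defs
  imports "HOL-Analysis.Analysis"
begin

type_synonym pt = "real^2"

text \<open>A triangle T is given by its side lengths (a,b,c); we require a nondegenerate
  triangle: positive sides satisfying the strict triangle inequalities.\<close>
definition is_triangle :: "real \<times> real \<times> real \<Rightarrow> bool" where
  "is_triangle T \<longleftrightarrow> (case T of (a,b,c) \<Rightarrow>
     a > 0 \<and> b > 0 \<and> c > 0 \<and> a < b + c \<and> b < a + c \<and> c < a + b)"

definition congruent_to :: "real \<times> real \<times> real \<Rightarrow> pt \<Rightarrow> pt \<Rightarrow> pt \<Rightarrow> bool" where
  "congruent_to T A B C \<longleftrightarrow> (case T of (a,b,c) \<Rightarrow>
     dist B C = a \<and> dist C A = b \<and> dist A B = c)"

definition eps_congruent :: "real \<times> real \<times> real \<Rightarrow> real \<Rightarrow> pt \<Rightarrow> pt \<Rightarrow> pt \<Rightarrow> bool" where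
  "eps_congruent T \<epsilon> A' B' C' \<longleftrightarrow> (case T of (a,b,c) \<Rightarrow>
     (\<exists>A B C. congruent_to T A B C \<and>
        dist A' A \<le> \<epsilon> * min a (min b c) \<and>
        dist B' B \<le> \<epsilon> * min a (min b c) \<and>
        dist C' C \<le> \<epsilon> * min a (min b c)))"

definition H_edges :: "real \<times> real \<times> real \<Rightarrow> pt set \<Rightarrow> real \<Rightarrow> pt set set" where
  "H_edges T P \<epsilon> = {S. S \<subseteq> P \<and> card S = 3 \<and>
     (\<exists>A' B' C'. S = {A', B', C'} \<and> eps_congruent T \<epsilon> A' B' C')}"

definition h_eps :: "nat \<Rightarrow> real \<times> real \<times> real \<Rightarrow> real \<Rightarrow> nat" where
  "h_eps n T \<epsilon> = Max {card (H_edges T P \<epsilon>) | P. finite P \<and> card P = n}"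

definition h :: "nat \<Rightarrow> real \<times> real \<times> real \<Rightarrow> nat" where
  "h n T = Inf {h_eps n T \<epsilon> | \<epsilon>. \<epsilon> > 0}"

definition shadow_complete :: "'a set \<Rightarrow> 'a set set \<Rightarrow> bool" where
  "shadow_complete V E \<longleftrightarrow>
     (\<forall>u\<in>V. \<forall>v\<in>V. u \<noteq> v \<longrightarrow> (\<exists>e\<in>E. u \<in> e \<and> v \<in> e))"

definition lagrangian :: "'a set \<Rightarrow> 'a set set \<Rightarrow> real" where
  "lagrangian V E = Sup {(\<Sum>e\<in>E. \<Prod>v\<in>e. x v) | x.
      (\<forall>v\<in>V. 0 \<le> x v \<and> x v \<le> 1) \<and> (\<Sum>v\<in>V. x v) = 1}"

end

(*
  If two vertices u, v of a 3-graph lie in no common edge, the Lagrange polynomial is affine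
  along the segment between the weightings that move all weight of v onto u or of u onto v,
  so one of the two does not decrease it. Starting from the uniform weighting of an extremal
  n-point set, repeated merging yields a subset S with complete shadow whose Lagrangian is at
  least h(n,T)/n^3.

  Complete shadow forces every distance in S to be within 2 eps min(a,b,c) of a side length.
  Fix p, q in S: every other point is determined, up to less than half the minimal side, by the
  side lengths approximating its distances to p and q and by its side of the line pq, while
  distinct points are at least that far apart. Hence |S| <= 2 + 2 * 3^2 = 20.
*)
theory Submission
  imports Defs
begin

definition lagrange_poly :: "'a set set \<Rightarrow> ('a \<Rightarrow> real) \<Rightarrow> real" where
  "lagrange_poly E x = (\<Sum>e\<in>E. \<Prod>v\<in>e. x v)"

definition merge_weight :: "('a \<Rightarrow> real) \<Rightarrow> 'a \<Rightarrow> 'a \<Rightarrow> 'a \<Rightarrow> real" where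
  "merge_weight x u v = x(u := x u + x v, v := 0)"

lemma lagrange_poly_const:
  assumes "\<And>e. e \<in> E \<Longrightarrow> card e = 3"
  shows "lagrange_poly E (\<lambda>_. c) = real (card E) * c ^ 3"
  using assms by (simp add: lagrange_poly_def)

lemma lagrange_poly_le_lagrangian:
  assumes "finite V" "E \<subseteq> Pow V" "\<forall>v\<in>V. 0 \<le> x v" "sum x V = 1"
  shows "lagrange_poly E x \<le> lagrangian V E"
  unfolding lagrangian_def lagrange_poly_def
proof (rule cSup_upper)
  have "x v \<le> 1" if "v \<in> V" for v
    using assms that member_le_sum[of v V x] by auto
  then show "(\<Sum>e\<in>E. \<Prod>v\<in>e. x v) \<in> {\<Sum>e\<in>E. \<Prod>v\<in>e. x v |x :: 'a \<Rightarrow> real.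
      (\<forall>v\<in>V. 0 \<le> x v \<and> x v \<le> 1) \<and> sum x V = 1}"
    using assms by blast
  have bound: "(\<Sum>e\<in>E. \<Prod>v\<in>e. y v) \<le> real (card E)" if "\<forall>v\<in>V. 0 \<le> y v \<and> y v \<le> 1" for y
  proof -
    have "(\<Sum>e\<in>E. \<Prod>v\<in>e. y v) \<le> (\<Sum>e\<in>E. 1)"
      using that assms(2) by (intro sum_mono prod_le_1) auto
    then show ?thesis by simp
  qed
  show "bdd_above {\<Sum>e\<in>E. \<Prod>v\<in>e. x v |x :: 'a \<Rightarrow> real.
      (\<forall>v\<in>V. 0 \<le> x v \<and> x v \<le> 1) \<and> sum x V = 1}"
    using bound by (auto intro!: bdd_aboveI[of _ "real (card E)"])
qed

lemma prod_merge_weight_in: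
  assumes "finite e" "u \<in> e" "v \<notin> e"
  shows "(\<Prod>w\<in>e. merge_weight x u v w) = (x u + x v) * (\<Prod>w\<in>e - {u}. x w)"
proof -
  have "(\<Prod>w\<in>e - {u}. merge_weight x u v w) = (\<Prod>w\<in>e - {u}. x w)"
    using assms(3) by (intro prod.cong) (auto simp: merge_weight_def)
  moreover have "u \<noteq> v" using assms by blast
  ultimately show ?thesis
    using assms by (simp add: prod.remove[of e u] merge_weight_def)
qed

lemma prod_merge_weight_out:
  assumes "finite e" "v \<in> e" "u \<noteq> v"
  shows "(\<Prod>w\<in>e. merge_weight x u v w) = 0"
  using assms by (intro prod_zero) (auto simp: merge_weight_def intro!: bexI[of _ v])

lemma prod_merge_weight_disjoint:
  assumes "u \<notin> e" "v \<notin> e"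
  shows "(\<Prod>w\<in>e. merge_weight x u v w) = (\<Prod>w\<in>e. x w)"
  using assms by (intro prod.cong) (auto simp: merge_weight_def)

lemma prod_merge_weight_convex:
  assumes "finite e" "u \<noteq> v" "\<not> (u \<in> e \<and> v \<in> e)" "0 < x u + x v"
  shows "(\<Prod>w\<in>e. x w) = x u / (x u + x v) * (\<Prod>w\<in>e. merge_weight x u v w)
                        + x v / (x u + x v) * (\<Prod>w\<in>e. merge_weight x v u w)"
proof -
  consider "u \<in> e" "v \<notin> e" | "v \<in> e" "u \<notin> e" | "u \<notin> e" "v \<notin> e"
    using assms(3) by blast
  then show ?thesis
  proof cases
    case 1
    have "(\<Prod>w\<in>e. x w) = x u * (\<Prod>w\<in>e - {u}. x w)"
      using assms(1) 1 by (simp add: prod.remove)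
    with 1 show ?thesis
      using assms by (simp add: prod_merge_weight_in prod_merge_weight_out)
  next
    case 2
    have "(\<Prod>w\<in>e. x w) = x v * (\<Prod>w\<in>e - {v}. x w)"
      using assms(1) 2 by (simp add: prod.remove)
    with 2 show ?thesis
      using assms by (simp add: prod_merge_weight_in prod_merge_weight_out add.commute)
  next
    case 3
    then show ?thesis
      using assms by (simp add: prod_merge_weight_disjoint add_divide_distrib[symmetric] ring_distribs(2)[symmetric])
  qed
qed

lemma lagrange_poly_le_max_merge_weight:
  assumes "finite E" "\<forall>e\<in>E. finite e \<and> \<not> (u \<in> e \<and> v \<in> e)" "u \<noteq> v" "0 \<le> x u" "0 \<le> x v"
  shows "lagrange_poly E x
           \<le> max (lagrange_poly E (merge_weight x u v)) (lagrange_poly E (merge_weight x v u))"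
proof (cases "x u + x v = 0")
  case True
  then have "x u = 0" "x v = 0" using assms by linarith+
  then have "merge_weight x u v = x" by (auto simp: merge_weight_def fun_eq_iff)
  then show ?thesis by simp
next
  case False
  then have pos: "0 < x u + x v" using assms by linarith
  define l where "l = x u / (x u + x v)"
  have l: "0 \<le> l" "l \<le> 1" "x v / (x u + x v) = 1 - l"
    using assms pos by (simp_all add: l_def divide_simps)
  have "lagrange_poly E x = (\<Sum>e\<in>E. l * (\<Prod>w\<in>e. merge_weight x u v w)
                                     + (1 - l) * (\<Prod>w\<in>e. merge_weight x v u w))"
    unfolding lagrange_poly_def
  proof (rule sum.cong)
    fix e assume "e \<in> E"
    then show "(\<Prod>w\<in>e. x w) = l * (\<Prod>w\<in>e. merge_weight x u v w)
                                     + (1 - l) * (\<Prod>w\<in>e. merge_weight x v u w)"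
      using prod_merge_weight_convex[of e u v x] assms pos unfolding l_def l(3) by blast
  qed simp
  also have "\<dots> = l * lagrange_poly E (merge_weight x u v) + (1 - l) * lagrange_poly E (merge_weight x v u)"
    by (simp add: lagrange_poly_def sum.distrib sum_distrib_left)
  also have "\<dots> \<le> max (lagrange_poly E (merge_weight x u v)) (lagrange_poly E (merge_weight x v u))"
    using l by (intro convex_bound_le) auto
  finally show ?thesis .
qed

lemma lagrange_poly_delete_vertex:
  assumes "finite E" "\<forall>e\<in>E. finite e" "y b = 0"
  shows "lagrange_poly {e\<in>E. b \<notin> e} y = lagrange_poly E y"
  unfolding lagrange_poly_def
  using assms by (intro sum.mono_neutral_left) (auto intro: prod_zero)

lemma sum_merge_weight:
  assumes "finite V" "a \<in> V" "b \<in> V" "a \<noteq> b"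
  shows "sum (merge_weight x a b) (V - {b}) = sum x V"
proof -
  have "sum (merge_weight x a b) (V - {b}) = merge_weight x a b a + sum (merge_weight x a b) (V - {b} - {a})"
    using assms by (intro sum.remove) auto
  also have "sum (merge_weight x a b) (V - {b} - {a}) = sum x (V - {b} - {a})"
    by (intro sum.cong) (auto simp: merge_weight_def)
  also have "merge_weight x a b a + sum x (V - {b} - {a}) = x b + (x a + sum x (V - {b} - {a}))"
    using assms by (simp add: merge_weight_def)
  also have "\<dots> = sum x V"
    using assms by (simp add: sum.remove[symmetric] sum_diff1)
  finally show ?thesis .
qed

lemma exists_shadow_complete_induced:
  assumes "finite V" "E \<subseteq> Pow V" "\<forall>v\<in>V. 0 \<le> x v"
  shows "\<exists>S y. S \<subseteq> V \<and> (\<forall>v\<in>S. 0 \<le> y v) \<and> sum y S = sum x V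
           \<and> lagrange_poly E x \<le> lagrange_poly {e\<in>E. e \<subseteq> S} y
           \<and> shadow_complete S {e\<in>E. e \<subseteq> S}"
  using assms
proof (induction "card V" arbitrary: V E x rule: less_induct)
  case less
  have induced_self: "{e\<in>E. e \<subseteq> V} = E" using less.prems(2) by blast
  show ?case
  proof (cases "shadow_complete V E")
    case True
    then show ?thesis
      using less.prems(3) by (intro exI[of _ V] exI[of _ x]) (simp add: induced_self)
  next
    case False
    then obtain u v where uv: "u \<in> V" "v \<in> V" "u \<noteq> v" "\<forall>e\<in>E. \<not> (u \<in> e \<and> v \<in> e)"
      unfolding shadow_complete_def by blast
    have fin: "finite E" "\<forall>e\<in>E. finite e"
      using less.prems(1,2) by (auto intro: finite_subset)
    have "lagrange_poly E x
            \<le> max (lagrange_poly E (merge_weight x u v)) (lagrange_poly E (merge_weight x v u))"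
      using fin uv less.prems(3) by (intro lagrange_poly_le_max_merge_weight) auto
    then obtain a b where ab: "a \<in> V" "b \<in> V" "a \<noteq> b"
      and improves: "lagrange_poly E x \<le> lagrange_poly E (merge_weight x a b)"
      using uv unfolding max_def by (metis (full_types))
    define y where "y = merge_weight x a b"
    define E' where "E' = {e\<in>E. b \<notin> e}"
    have card_less: "card (V - {b}) < card V" using less.prems(1) ab(2) by (rule card_Diff1_less)
    have E'_Pow: "E' \<subseteq> Pow (V - {b})" using less.prems(2) by (auto simp: E'_def)
    have y_nonneg: "\<forall>v\<in>V - {b}. 0 \<le> y v" using less.prems(3) ab by (auto simp: y_def merge_weight_def)
    obtain S z where S: "S \<subseteq> V - {b}" "\<forall>v\<in>S. 0 \<le> z v" "sum z S = sum y (V - {b})"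
      "lagrange_poly E' y \<le> lagrange_poly {e\<in>E'. e \<subseteq> S} z" "shadow_complete S {e\<in>E'. e \<subseteq> S}"
      using less.hyps[OF card_less _ E'_Pow y_nonneg] less.prems(1) by blast
    have induced: "{e\<in>E'. e \<subseteq> S} = {e\<in>E. e \<subseteq> S}" using S(1) by (auto simp: E'_def)
    have "lagrange_poly E' y = lagrange_poly E y"
      unfolding E'_def using fin by (intro lagrange_poly_delete_vertex) (auto simp: y_def merge_weight_def)
    moreover have "sum y (V - {b}) = sum x V" using less.prems(1) ab by (simp add: y_def sum_merge_weight)
    ultimately show ?thesis
      using S improves unfolding induced y_def[symmetric]
      by (intro exI[of _ S] exI[of _ z]) auto
  qed
qed

lemma exists_shadow_complete_induced_lagrangian:
  assumes "finite V" "E \<subseteq> Pow V" "\<forall>v\<in>V. 0 \<le> x v" "sum x V = 1"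
  obtains S where "S \<subseteq> V" "shadow_complete S {e\<in>E. e \<subseteq> S}"
    "lagrange_poly E x \<le> lagrangian S {e\<in>E. e \<subseteq> S}"
proof -
  obtain S y where S: "S \<subseteq> V" "\<forall>v\<in>S. 0 \<le> y v" "sum y S = 1"
    "lagrange_poly E x \<le> lagrange_poly {e\<in>E. e \<subseteq> S} y" "shadow_complete S {e\<in>E. e \<subseteq> S}"
    using exists_shadow_complete_induced[OF assms(1-3)] assms(4) by auto
  have "lagrange_poly {e\<in>E. e \<subseteq> S} y \<le> lagrangian S {e\<in>E. e \<subseteq> S}"
    using S(1-3) assms(1) by (intro lagrange_poly_le_lagrangian) (auto dest: finite_subset)
  then show ?thesis using that S by force
qed

definition cross2 :: "real^2 \<Rightarrow> real^2 \<Rightarrow> real" where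
  "cross2 u w = u$1 * w$2 - u$2 * w$1"

lemma inner_sq_add_cross2_sq: "(inner u w)^2 + (cross2 u w)^2 = (norm u)^2 * (norm w)^2"
  unfolding power2_norm_eq_inner inner_vec_def sum_2 cross2_def inner_real_def
  by algebra

lemma cross2_diff_right: "cross2 u (w - z) = cross2 u w - cross2 u z"
  unfolding cross2_def by (simp add: algebra_simps)

lemma norm_sq_mult_norm_diff_sq:
  "(norm u)^2 * (norm (w - z))^2 = (inner u w - inner u z)^2 + (cross2 u w - cross2 u z)^2"
  using inner_sq_add_cross2_sq[of u "w - z"] by (simp add: inner_diff_right cross2_diff_right)

lemma sq_diff_le_abs_sq_diff:
  fixes c c' :: real
  assumes "0 \<le> c * c'"
  shows "(c - c')^2 \<le> \<bar>c^2 - c'^2\<bar>"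
proof -
  have "\<bar>c - c'\<bar> \<le> \<bar>c + c'\<bar>"
    using assms by (smt (verit) mult_nonneg_nonpos2 mult_nonpos_nonpos zero_le_mult_iff)
  then have "\<bar>c - c'\<bar> * \<bar>c - c'\<bar> \<le> \<bar>c - c'\<bar> * \<bar>c + c'\<bar>"
    by (intro mult_left_mono) auto
  then show ?thesis
    by (simp add: abs_mult[symmetric] power2_eq_square algebra_simps)
qed

lemma abs_sq_diff_le:
  fixes x y k \<delta> :: real
  assumes "\<bar>x - k\<bar> \<le> \<delta>" "\<bar>y - k\<bar> \<le> \<delta>" "\<delta> \<le> k"
  shows "\<bar>x^2 - y^2\<bar> \<le> 4 * k * \<delta>"
proof -
  have "(k - \<delta>)^2 \<le> x^2" "x^2 \<le> (k + \<delta>)^2" and "(k - \<delta>)^2 \<le> y^2" "y^2 \<le> (k + \<delta>)^2"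
    using assms by (auto intro!: power_mono)
  moreover have "(k + \<delta>)^2 - (k - \<delta>)^2 = 4 * k * \<delta>"
    by (simp add: power2_eq_square algebra_simps)
  ultimately show ?thesis by linarith
qed

lemma near_dists_estimate:
  fixes m M \<delta> s :: real
  assumes "0 < m" "m \<le> M" "0 \<le> \<delta>" "\<delta> \<le> m" "m / 2 \<le> s" "400 * M^2 * \<delta> < m^3"
  shows "(4 * M * \<delta>)^2 + s^2 * (4 * M * \<delta>) + (4 * M * \<delta>) * (2 * s * (M + \<delta>))
           < s^2 * (m / 2)^2"
proof -
  have M: "0 < M" using assms by linarith
  have s: "0 < s" "m \<le> 2 * s" using assms by linarith+
  have "m * (4 * M * \<delta>)^2 = 16 * M^2 * \<delta> * (\<delta> * m)" by (simp add: power2_eq_square)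
  also have "\<dots> \<le> 16 * M^2 * \<delta> * (2 * s * (2 * s))"
    using assms s by (intro mult_left_mono mult_mono) auto
  finally have t1: "m * (4 * M * \<delta>)^2 \<le> 64 * M^2 * \<delta> * s^2" by (simp add: power2_eq_square)
  have t2: "m * (s^2 * (4 * M * \<delta>)) \<le> 4 * M^2 * \<delta> * s^2"
    using assms mult_right_mono[of m M "s^2 * (4 * M * \<delta>)"] by (simp add: power2_eq_square)
  have "m * ((4 * M * \<delta>) * (2 * s * (M + \<delta>))) = 8 * M * \<delta> * s * (m * (M + \<delta>))"
    by (simp add: algebra_simps)
  also have "\<dots> \<le> 8 * M * \<delta> * s * (2 * s * (2 * M))"
    using assms M s by (intro mult_left_mono mult_mono) auto
  finally have t3: "m * ((4 * M * \<delta>) * (2 * s * (M + \<delta>))) \<le> 32 * M^2 * \<delta> * s^2"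
    by (simp add: power2_eq_square)
  have "100 * M^2 * \<delta> * s^2 < m * (s^2 * (m / 2)^2)"
    using assms s mult_strict_right_mono[of "400 * M^2 * \<delta>" "m^3" "s^2"]
    by (simp add: power2_eq_square power3_eq_cube)
  then have "m * ((4 * M * \<delta>)^2 + s^2 * (4 * M * \<delta>) + (4 * M * \<delta>) * (2 * s * (M + \<delta>)))
             < m * (s^2 * (m / 2)^2)"
    using t1 t2 t3 by (simp only: distrib_left)
  then show ?thesis using assms(1) by simp
qed

lemma small_tolerance_bounds:
  fixes m M \<delta> :: real
  assumes "0 \<le> \<delta>" "m \<le> M" "400 * M^2 * \<delta> < m^3"
  shows "0 < m" "400 * \<delta> < m"
proof -
  have "0 \<le> 400 * M^2 * \<delta>" using assms by simp
  then have "0 < m^3" using assms by linarith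
  then show m: "0 < m" by simp
  have "m^3 \<le> M^2 * m"
    using m assms(2) by (simp add: power3_eq_cube power2_eq_square mult_mono)
  then have "M^2 * (400 * \<delta>) < M^2 * m" using assms(3) by (simp add: algebra_simps)
  then show "400 * \<delta> < m" by (rule mult_left_less_imp_less) simp
qed

text \<open>By polarization the inner products of w and z with u are nearly equal; by the Lagrange
  identity so are the squares of their cross products with u, and equal signs make the cross
  products themselves nearly equal. As norm u is bounded below, w and z are close.\<close>
lemma norm_diff_lt_of_near_dists:
  fixes u w z :: "real^2"
  assumes w: "\<bar>norm w - k\<bar> \<le> \<delta>" and z: "\<bar>norm z - k\<bar> \<le> \<delta>"
    and wu: "\<bar>norm (w - u) - l\<bar> \<le> \<delta>" and zu: "\<bar>norm (z - u) - l\<bar> \<le> \<delta>"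
    and side: "(0 \<le> cross2 u w) = (0 \<le> cross2 u z)"
    and bounds: "m \<le> k" "k \<le> M" "m \<le> l" "l \<le> M"
    and u: "m / 2 \<le> norm u" and \<delta>: "0 \<le> \<delta>" "400 * M^2 * \<delta> < m^3"
  shows "norm (w - z) < m / 2"
proof -
  have m: "0 < m" and "400 * \<delta> < m" using small_tolerance_bounds[OF \<delta>(1) _ \<delta>(2)] bounds by auto
  then have \<delta>_le: "\<delta> \<le> m" using \<delta> by linarith
  define s where "s = norm u"
  define d where "d = 4 * M * \<delta>"
  have diff_sq_norm_w: "\<bar>(norm w)^2 - (norm z)^2\<bar> \<le> d"
    using abs_sq_diff_le[OF w z] mult_right_mono[of k M "4 * \<delta>"] bounds \<delta> \<delta>_le
    unfolding d_def by linarith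
  have diff_sq_norm_wu: "\<bar>(norm (w - u))^2 - (norm (z - u))^2\<bar> \<le> d"
    using abs_sq_diff_le[OF wu zu] mult_right_mono[of l M "4 * \<delta>"] bounds \<delta> \<delta>_le
    unfolding d_def by linarith
  have polar: "inner u x = (s^2 + (norm x)^2 - (norm (x - u))^2) / 2" for x
    unfolding s_def dot_norm_neg by (simp add: norm_minus_commute)
  have diff_inner: "\<bar>inner u w - inner u z\<bar> \<le> d"
    using diff_sq_norm_w diff_sq_norm_wu unfolding polar abs_le_iff by (simp add: field_simps)
  have abs_inner: "\<bar>inner u x\<bar> \<le> s * (M + \<delta>)" if "\<bar>norm x - k\<bar> \<le> \<delta>" for x
  proof -
    have "\<bar>inner u x\<bar> \<le> s * norm x" unfolding s_def by (rule Cauchy_Schwarz_ineq2)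
    also have "\<dots> \<le> s * (M + \<delta>)" using that bounds by (intro mult_left_mono) (auto simp: s_def)
    finally show ?thesis .
  qed
  have "(cross2 u w)^2 - (cross2 u z)^2
        = s^2 * ((norm w)^2 - (norm z)^2) - (inner u w - inner u z) * (inner u w + inner u z)"
    using inner_sq_add_cross2_sq[of u w] inner_sq_add_cross2_sq[of u z]
    by (simp add: s_def algebra_simps power2_eq_square)
  also have "\<bar>\<dots>\<bar> \<le> s^2 * d + d * (2 * s * (M + \<delta>))"
  proof -
    have "\<bar>s^2 * ((norm w)^2 - (norm z)^2)\<bar> \<le> s^2 * d"
      using diff_sq_norm_w by (simp add: abs_mult mult_left_mono)
    moreover have "\<bar>(inner u w - inner u z) * (inner u w + inner u z)\<bar> \<le> d * (2 * s * (M + \<delta>))"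
      unfolding abs_mult using diff_inner abs_inner[OF w] abs_inner[OF z] by (intro mult_mono) auto
    ultimately show ?thesis by linarith
  qed
  finally have diff_sq_cross: "\<bar>(cross2 u w)^2 - (cross2 u z)^2\<bar> \<le> s^2 * d + d * (2 * s * (M + \<delta>))" .
  have "0 \<le> cross2 u w * cross2 u z"
    using side by (cases "0 \<le> cross2 u w") (auto intro: mult_nonneg_nonneg mult_nonpos_nonpos)
  then have diff_cross: "(cross2 u w - cross2 u z)^2 \<le> s^2 * d + d * (2 * s * (M + \<delta>))"
    using sq_diff_le_abs_sq_diff diff_sq_cross order_trans by blast
  have "d^2 \<ge> (inner u w - inner u z)^2"
    using power_mono[OF diff_inner abs_ge_zero, of 2] by simp
  then have "s^2 * (norm (w - z))^2 < s^2 * (m / 2)^2"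
    using norm_sq_mult_norm_diff_sq[of u w z] diff_cross bounds
      near_dists_estimate[OF m _ \<delta>(1) \<delta>_le u[folded s_def] \<delta>(2), folded d_def]
    unfolding s_def by linarith
  then have "(norm (w - z))^2 < (m / 2)^2" by (simp add: mult_less_cancel_left)
  then show ?thesis by (rule power_less_imp_less_base) (use m in simp)
qed

lemma card_le_of_dists_near:
  fixes S :: "(real^2) set" and K :: "real set"
  assumes S: "finite S" and K: "finite K" "\<forall>k\<in>K. m \<le> k \<and> k \<le> M"
    and dists: "\<forall>u\<in>S. \<forall>w\<in>S. u \<noteq> w \<longrightarrow> (\<exists>k\<in>K. \<bar>dist u w - k\<bar> \<le> \<delta>)"
    and \<delta>: "0 \<le> \<delta>" "400 * M^2 * \<delta> < m^3"
  shows "card S \<le> 2 * card K ^ 2 + 2"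
proof (cases "card S \<le> 1")
  case True
  then show ?thesis by simp
next
  case False
  then obtain p q where pq: "p \<in> S" "q \<in> S" "p \<noteq> q"
    using S card_le_Suc0_iff_eq[of S] by auto
  then obtain k0 where "k0 \<in> K" using dists by blast
  then have "m \<le> M" using K(2) by force
  then have m: "0 < m" and "400 * \<delta> < m"
    using small_tolerance_bounds[OF \<delta>(1) _ \<delta>(2)] by auto
  then have \<delta>_le: "\<delta> \<le> m / 2" using \<delta> by linarith
  have sep: "m / 2 \<le> dist r r'" if rr': "r \<in> S" "r' \<in> S" "r \<noteq> r'" for r r'
  proof -
    obtain k where "k \<in> K" "\<bar>dist r r' - k\<bar> \<le> \<delta>" using dists rr' by blast
    moreover have "m \<le> k" using K(2) \<open>k \<in> K\<close> by blast
    ultimately show ?thesis using \<delta>_le by linarith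
  qed
  define cell where "cell = (\<lambda>(k1, k2, b). {r \<in> S. \<bar>dist r p - k1\<bar> \<le> \<delta> \<and> \<bar>dist r q - k2\<bar> \<le> \<delta>
                                           \<and> (0 \<le> cross2 (q - p) (r - p)) = b})"
  define keys where "keys = K \<times> K \<times> (UNIV :: bool set)"
  have keys: "finite keys" "card keys = card K ^ 2 * 2"
    using K(1) by (simp_all add: keys_def card_cartesian_product power2_eq_square)
  have cell_subset: "cell c \<subseteq> S" for c by (auto simp: cell_def split: prod.splits)
  then have cell_finite: "finite (cell c)" for c using S by (rule finite_subset)
  have cover: "S - {p, q} \<subseteq> (\<Union>c\<in>keys. cell c)"
  proof
    fix r assume r: "r \<in> S - {p, q}"
    obtain k1 where "k1 \<in> K" "\<bar>dist r p - k1\<bar> \<le> \<delta>" using dists pq r by blast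
    moreover obtain k2 where "k2 \<in> K" "\<bar>dist r q - k2\<bar> \<le> \<delta>" using dists pq r by blast
    ultimately show "r \<in> (\<Union>c\<in>keys. cell c)"
      using r unfolding keys_def cell_def
      by (intro UN_I[of "(k1, k2, 0 \<le> cross2 (q - p) (r - p))"]) auto
  qed
  have cell_le_1: "card (cell c) \<le> 1" if key: "c \<in> keys" for c
  proof -
    obtain k1 k2 b where c: "c = (k1, k2, b)" "k1 \<in> K" "k2 \<in> K"
      using key by (auto simp: keys_def)
    have "r = r'" if "r \<in> cell c" "r' \<in> cell c" for r r'
    proof (rule ccontr)
      assume "r \<noteq> r'"
      moreover have "r \<in> S" "r' \<in> S" using that by (auto simp: c cell_def)
      ultimately have "m / 2 \<le> norm ((r - p) - (r' - p))"
        using sep[of r r'] by (simp add: dist_norm)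
      moreover have "norm ((r - p) - (r' - p)) < m / 2"
      proof (rule norm_diff_lt_of_near_dists[where u = "q - p" and k = k1 and l = k2 and M = M])
        show "(0 \<le> cross2 (q - p) (r - p)) = (0 \<le> cross2 (q - p) (r' - p))"
          using that by (simp add: c cell_def)
        show "m / 2 \<le> norm (q - p)" using sep[of q p] pq by (simp add: dist_norm)
      qed (use that c K(2) \<delta> in \<open>auto simp: cell_def dist_norm\<close>)
      ultimately show False by linarith
    qed
    then show ?thesis using card_le_Suc0_iff_eq[OF cell_finite] by (metis One_nat_def)
  qed
  have "card (S - {p, q}) \<le> card (\<Union>c\<in>keys. cell c)"
    using cover by (intro card_mono finite_UN_I keys(1) cell_finite)
  also have "\<dots> \<le> (\<Sum>c\<in>keys. card (cell c))" by (rule card_UN_le[OF keys(1)])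
  also have "\<dots> \<le> card keys" using sum_mono[OF cell_le_1] by simp
  finally show ?thesis using S pq keys(2) by (simp add: card_Diff_subset)
qed

lemma H_edges_subset_Pow: "H_edges T P \<epsilon> \<subseteq> Pow P"
  by (auto simp: H_edges_def)

lemma card_H_edge: "e \<in> H_edges T P \<epsilon> \<Longrightarrow> card e = 3"
  by (simp add: H_edges_def)

lemma H_edges_induced: "S \<subseteq> P \<Longrightarrow> H_edges T S \<epsilon> = {e \<in> H_edges T P \<epsilon>. e \<subseteq> S}"
  by (auto simp: H_edges_def)

lemma h_le_card_H_edges:
  assumes "0 < \<epsilon>"
  obtains Q :: "pt set" where "finite Q" "card Q = n" "h n T \<le> card (H_edges T Q \<epsilon>)"
proof -
  define X where "X = {card (H_edges T P \<epsilon>) | P :: pt set. finite P \<and> card P = n}"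
  have "infinite (UNIV :: pt set)" by (rule infinite_UNIV_vec) (rule infinite_UNIV_char_0)
  then obtain P0 :: "pt set" where "finite P0" "card P0 = n"
    using infinite_arbitrarily_large by blast
  then have "X \<noteq> {}" by (auto simp: X_def)
  have "X \<subseteq> {..2 ^ n}"
  proof
    fix k assume "k \<in> X"
    then obtain P :: "pt set" where P: "finite P" "card P = n" "k = card (H_edges T P \<epsilon>)"
      by (auto simp: X_def)
    then have "k \<le> card (Pow P)" using card_mono[OF _ H_edges_subset_Pow] by simp
    then show "k \<in> {..2 ^ n}" using P by (simp add: card_Pow)
  qed
  then have "Max X \<in> X" using \<open>X \<noteq> {}\<close> by (intro Max_in) (auto dest: finite_subset)
  then obtain Q :: "pt set" where Q: "finite Q" "card Q = n" "card (H_edges T Q \<epsilon>) = h_eps n T \<epsilon>"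
    by (auto simp: X_def h_eps_def)
  moreover have "h n T \<le> h_eps n T \<epsilon>"
    unfolding h_def using assms by (intro cInf_lower) auto
  ultimately show ?thesis using that by simp
qed

lemma abs_dist_diff_le_dist_add: "\<bar>dist x' y' - dist x y\<bar> \<le> dist x' x + dist y' y"
  using dist_triangle[of x' y' x] dist_triangle[of x y' y] dist_triangle[of x y x']
    dist_triangle[of x' y y'] dist_commute[of x' x] dist_commute[of y' y]
  by linarith

lemma eps_congruent_dist_near_side:
  assumes "eps_congruent (a, b, c) \<epsilon> A' B' C'" "u \<in> {A', B', C'}" "w \<in> {A', B', C'}" "u \<noteq> w"
  shows "\<exists>k\<in>{a, b, c}. \<bar>dist u w - k\<bar> \<le> 2 * \<epsilon> * min a (min b c)"
proof -
  define r where "r = \<epsilon> * min a (min b c)"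
  obtain A B C where ABC: "dist B C = a" "dist C A = b" "dist A B = c"
    and near: "dist A' A \<le> r" "dist B' B \<le> r" "dist C' C \<le> r"
    using assms(1) unfolding eps_congruent_def congruent_to_def r_def by auto
  have "\<bar>dist B' C' - a\<bar> \<le> 2 * r" "\<bar>dist C' A' - b\<bar> \<le> 2 * r" "\<bar>dist A' B' - c\<bar> \<le> 2 * r"
    using abs_dist_diff_le_dist_add[of B' C' B C] abs_dist_diff_le_dist_add[of C' A' C A]
      abs_dist_diff_le_dist_add[of A' B' A B] ABC near by linarith+
  then show ?thesis
    using assms(2-4) by (auto simp: dist_commute r_def mult.assoc)
qed

lemma dist_near_side_if_shadow_complete:
  assumes "shadow_complete S (H_edges (a, b, c) S \<epsilon>)" "u \<in> S" "w \<in> S" "u \<noteq> w"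
  shows "\<exists>k\<in>{a, b, c}. \<bar>dist u w - k\<bar> \<le> 2 * \<epsilon> * min a (min b c)"
proof -
  obtain e where "e \<in> H_edges (a, b, c) S \<epsilon>" "u \<in> e" "w \<in> e"
    using assms unfolding shadow_complete_def by blast
  then obtain A' B' C' where "e = {A', B', C'}" "eps_congruent (a, b, c) \<epsilon> A' B' C'"
    by (auto simp: H_edges_def)
  then show ?thesis
    using eps_congruent_dist_near_side \<open>u \<in> e\<close> \<open>w \<in> e\<close> assms(4) by blast
qed

lemma card_le_3: "card {a, b, c} \<le> 3"
  by (simp add: card_insert_if)

definition eps_threshold :: "real \<times> real \<times> real \<Rightarrow> real" where
  "eps_threshold T = (case T of (a, b, c) \<Rightarrow> min a (min b c) ^ 2 / (1000 * max a (max b c) ^ 2))"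

lemma eps_threshold_pos: "is_triangle T \<Longrightarrow> 0 < eps_threshold T"
  by (auto simp: is_triangle_def eps_threshold_def split: prod.splits)

lemma card_le_20_if_shadow_complete:
  assumes T: "is_triangle T" and S: "finite S" "shadow_complete S (H_edges T S \<epsilon>)"
    and \<epsilon>: "0 < \<epsilon>" "\<epsilon> < eps_threshold T"
  shows "card S \<le> 20"
proof -
  obtain a b c where abc: "T = (a, b, c)" by (cases T)
  define m where "m = min a (min b c)"
  define M where "M = max a (max b c)"
  have m: "0 < m" "m \<le> M" using T by (auto simp: abc is_triangle_def m_def M_def)
  have "\<epsilon> < m^2 / (1000 * M^2)" using \<epsilon>(2) by (simp add: abc eps_threshold_def m_def M_def)
  then have "800 * M^2 * m * \<epsilon> < 800 * M^2 * m * (m^2 / (1000 * M^2))"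
    using m by (intro mult_strict_left_mono) auto
  also have "\<dots> < m^3" using m by (simp add: field_simps power2_eq_square power3_eq_cube)
  finally have small: "400 * M^2 * (2 * \<epsilon> * m) < m^3" by (simp add: algebra_simps)
  have near: "\<forall>u\<in>S. \<forall>w\<in>S. u \<noteq> w \<longrightarrow> (\<exists>k\<in>{a, b, c}. \<bar>dist u w - k\<bar> \<le> 2 * \<epsilon> * m)"
    using dist_near_side_if_shadow_complete[of S a b c \<epsilon>] S(2) by (simp add: abc m_def)
  have "\<forall>k\<in>{a, b, c}. m \<le> k \<and> k \<le> M" by (auto simp: m_def M_def)
  then have "card S \<le> 2 * card {a, b, c} ^ 2 + 2"
    using S(1) near \<epsilon>(1) m(1) small by (intro card_le_of_dists_near) auto
  also have "\<dots> \<le> 2 * 3 ^ 2 + 2"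
    using power_mono[OF card_le_3[of a b c], of 2] by simp
  finally show ?thesis by simp
qed

theorem lemma3p1:
  fixes T :: "real \<times> real \<times> real" and n :: nat
  assumes "is_triangle T" and "n > 0"
  shows "\<exists>\<epsilon>0 > 0. \<forall>\<epsilon>. 0 < \<epsilon> \<and> \<epsilon> < \<epsilon>0 \<longrightarrow>
           (\<exists>P :: pt set. finite P \<and> card P \<le> 20 \<and>
              shadow_complete P (H_edges T P \<epsilon>) \<and>
              real (h n T) \<le> real n ^ 3 * lagrangian P (H_edges T P \<epsilon>))"
proof (intro exI[of _ "eps_threshold T"] conjI allI impI)
  show "0 < eps_threshold T" using assms(1) by (rule eps_threshold_pos)
  fix \<epsilon> assume \<epsilon>: "0 < \<epsilon> \<and> \<epsilon> < eps_threshold T"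
  obtain Q where Q: "finite Q" "card Q = n" "h n T \<le> card (H_edges T Q \<epsilon>)"
    using h_le_card_H_edges \<epsilon> by blast
  define x :: "pt \<Rightarrow> real" where "x = (\<lambda>_. 1 / real n)"
  have "sum x Q = 1" using Q(2) assms(2) by (simp add: x_def)
  then obtain S where S: "S \<subseteq> Q" "shadow_complete S {e \<in> H_edges T Q \<epsilon>. e \<subseteq> S}"
    "lagrange_poly (H_edges T Q \<epsilon>) x \<le> lagrangian S {e \<in> H_edges T Q \<epsilon>. e \<subseteq> S}"
    using exists_shadow_complete_induced_lagrangian[OF Q(1) H_edges_subset_Pow[of T Q \<epsilon>], of x]
    by (auto simp: x_def)
  note H_S = H_edges_induced[OF S(1), symmetric]
  have "real (h n T) \<le> real (card (H_edges T Q \<epsilon>))" using Q(3) by simp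
  also have "\<dots> = real n ^ 3 * lagrange_poly (H_edges T Q \<epsilon>) x"
    using assms(2) by (simp add: x_def lagrange_poly_const card_H_edge power_divide)
  also have "\<dots> \<le> real n ^ 3 * lagrangian S (H_edges T S \<epsilon>)"
    using S(3) by (simp add: H_S mult_left_mono)
  finally show "\<exists>P :: pt set. finite P \<and> card P \<le> 20 \<and> shadow_complete P (H_edges T P \<epsilon>) \<and>
      real (h n T) \<le> real n ^ 3 * lagrangian P (H_edges T P \<epsilon>)"
    using S(1,2) Q(1) \<epsilon> assms(1) card_le_20_if_shadow_complete[of T S \<epsilon>] finite_subset
    unfolding H_S by blast
qed

end
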